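(* In $TTR$, let $A$ be an atomic formula. If $\Gamma\vdash_{TTR}t:A$, then $t$ does not begin with $\lambda$. In other words, if $\Gamma\vdash_{TTR}\lambda xu:B$, then $B$ is an arrow type.
   Context: $TTR$ types: over a second-order language with first-order variables, function symbols, $n$-ary predicate variables and symbols, and a fixed system $\mathbf E$ of equations; atomic formulas $\perp$ and $X(t_1,\dots,t_n)$; constructors $\to$, $\forall x$, $\forall X$, and $\mu Cx_1\dots x_nA\langle t_1,\dots,t_n\rangle$ for $C$ an $n$-ary predicate symbol occurring and positive in $A$. Subtyping $\subseteq$ is generated by: reflexivity; $A\subseteq A',B\subseteq B'\Rightarrow A'\to B\subseteq A\to B'$; $A[G/v]\subseteq B\Rightarrow\forall vA\subseteq B$; $A\subseteq B\Rightarrow A\subseteq\forall vB$ ($v$ not free in $A$); $A\subseteq B[v/y]\Rightarrow A\subseteq B[w/y]$ for $v=w$ an instance of an equation of $\mathbf E$; transitivity; $D[\mu C\bar xD\langle\bar z\rangle/C(\bar z)][\bar t/\bar x]\subseteq\mu C\bar xD\langle\bar t\rangle$ and its converse; $D[E/C(\bar x)]\subseteq E\Rightarrow\mu C\bar xD\langle\bar t\rangle\subseteq E[\bar t/\bar x]$. Typing $\Gamma\vdash_{TTR}t:A$: variable axiom; $\to$-intro/elim; $\forall$-intro (variable not free in context) and elimination for first- and second-order variables; equational rule for instances of $\mathbf E$; subsumption along $\subseteq$; rule (Y): from $\Gamma\vdash t:\forall\bar x[C(\bar x)\to E]\to\forall\bar x[D\to E]$ infer $\Gamma\vdash(Y)t:\forall\bar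 x[\mu C\bar xD\langle\bar x\rangle\to E]$ ($C$ not free in $E$ nor in $\Gamma$, $Y$ Turing's fixed point combinator). An arrow type is a type containing at least one $\to$. *)

theory Defs
  imports Main
begin

text \<open>Syntax of TTR, with de Bruijn indices for all binders.
  First-order variables form one index space; predicate variables and
  predicate symbols each have a separate index space per arity
  (the arity of an atom is the length of its argument list).\<close>

datatype 'f trm = V nat | Fn 'f "'f trm list"

fun tshift :: "nat \<Rightarrow> nat \<Rightarrow> 'f trm \<Rightarrow> 'f trm" where
  "tshift c d (V i) = (if i < c then V i else V (i + d))"
| "tshift c d (Fn f ts) = Fn f (map (tshift c d) ts)"

fun tinst :: "nat \<Rightarrow> 'f trm list \<Rightarrow> 'f trm \<Rightarrow> 'f trm" where
  "tinst k ss (V i) = (if i < k then V i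
      else if i - k < length ss then tshift 0 k (ss ! (i - k))
      else V (i - length ss))"
| "tinst k ss (Fn f ts) = Fn f (map (tinst k ss) ts)"

fun tsub :: "(nat \<Rightarrow> 'f trm) \<Rightarrow> 'f trm \<Rightarrow> 'f trm" where
  "tsub \<sigma> (V i) = \<sigma> i"
| "tsub \<sigma> (Fn f ts) = Fn f (map (tsub \<sigma>) ts)"

definition eq_inst :: "('f trm \<times> 'f trm) set \<Rightarrow> 'f trm \<Rightarrow> 'f trm \<Rightarrow> bool" where
  "eq_inst EE v w \<longleftrightarrow> (\<exists>l r \<sigma>. (l, r) \<in> EE \<and> v = tsub \<sigma> l \<and> w = tsub \<sigma> r)"

text \<open>Formulas: Bot; PV i ts = predicate variable applied to ts; PS i ts =
  predicate symbol applied to ts; Imp; AllI (first-order quantifier);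
  AllP n (quantifier over an n-ary predicate variable);
  Mu ts D = mu C x1..xn D <ts>, where n = length ts, C is predicate symbol 0
  of arity n in D and x1..xn are first-order indices 0..n-1 in D.\<close>
datatype 'f form = Bot | PV nat "'f trm list" | PS nat "'f trm list"
  | Imp "'f form" "'f form" | AllI "'f form" | AllP nat "'f form"
  | Mu "'f trm list" "'f form"

fun fshift :: "nat \<Rightarrow> nat \<Rightarrow> 'f form \<Rightarrow> 'f form" where
  "fshift c d Bot = Bot"
| "fshift c d (PV i ts) = PV i (map (tshift c d) ts)"
| "fshift c d (PS i ts) = PS i (map (tshift c d) ts)"
| "fshift c d (Imp A B) = Imp (fshift c d A) (fshift c d B)"
| "fshift c d (AllI A) = AllI (fshift (Suc c) d A)"
| "fshift c d (AllP n A) = AllP n (fshift c d A)"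
| "fshift c d (Mu ts D) = Mu (map (tshift c d) ts) (fshift (c + length ts) d D)"

fun finst :: "nat \<Rightarrow> 'f trm list \<Rightarrow> 'f form \<Rightarrow> 'f form" where
  "finst k ss Bot = Bot"
| "finst k ss (PV i ts) = PV i (map (tinst k ss) ts)"
| "finst k ss (PS i ts) = PS i (map (tinst k ss) ts)"
| "finst k ss (Imp A B) = Imp (finst k ss A) (finst k ss B)"
| "finst k ss (AllI A) = AllI (finst (Suc k) ss A)"
| "finst k ss (AllP n A) = AllP n (finst k ss A)"
| "finst k ss (Mu ts D) = Mu (map (tinst k ss) ts) (finst (k + length ts) ss D)"

fun pvshift :: "nat \<Rightarrow> nat \<Rightarrow> 'f form \<Rightarrow> 'f form" where
  "pvshift m c Bot = Bot"
| "pvshift m c (PV i ts) = (if length ts = m \<and> c \<le> i then PV (Suc i) ts else PV i ts)"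
| "pvshift m c (PS i ts) = PS i ts"
| "pvshift m c (Imp A B) = Imp (pvshift m c A) (pvshift m c B)"
| "pvshift m c (AllI A) = AllI (pvshift m c A)"
| "pvshift m c (AllP n A) = AllP n (pvshift m (if n = m then Suc c else c) A)"
| "pvshift m c (Mu ts D) = Mu ts (pvshift m c D)"

fun psshift :: "nat \<Rightarrow> nat \<Rightarrow> 'f form \<Rightarrow> 'f form" where
  "psshift m c Bot = Bot"
| "psshift m c (PV i ts) = PV i ts"
| "psshift m c (PS i ts) = (if length ts = m \<and> c \<le> i then PS (Suc i) ts else PS i ts)"
| "psshift m c (Imp A B) = Imp (psshift m c A) (psshift m c B)"
| "psshift m c (AllI A) = AllI (psshift m c A)"
| "psshift m c (AllP n A) = AllP n (psshift m c A)"
| "psshift m c (Mu ts D) = Mu ts (psshift m (if length ts = m then Suc c else c) D)"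

text \<open>psubst n k G A: substitute the n-ary predicate variable k by the
  abstraction G (a formula whose first-order indices 0..n-1 are the
  abstracted variables).\<close>
fun psubst :: "nat \<Rightarrow> nat \<Rightarrow> 'f form \<Rightarrow> 'f form \<Rightarrow> 'f form" where
  "psubst n k G Bot = Bot"
| "psubst n k G (PV i ts) = (if length ts = n then
      (if i = k then finst 0 ts G else if k < i then PV (i - 1) ts else PV i ts)
    else PV i ts)"
| "psubst n k G (PS i ts) = PS i ts"
| "psubst n k G (Imp A B) = Imp (psubst n k G A) (psubst n k G B)"
| "psubst n k G (AllI A) = AllI (psubst n k (fshift n 1 G) A)"
| "psubst n k G (AllP m A) = AllP m (psubst n (if m = n then Suc k else k) (pvshift m 0 G) A)"
| "psubst n k G (Mu ts D) = Mu ts (psubst n k (psshift (length ts) 0 (fshift n (length ts) G)) D)"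

fun ssubst :: "nat \<Rightarrow> nat \<Rightarrow> 'f form \<Rightarrow> 'f form \<Rightarrow> 'f form" where
  "ssubst n k G Bot = Bot"
| "ssubst n k G (PV i ts) = PV i ts"
| "ssubst n k G (PS i ts) = (if length ts = n then
      (if i = k then finst 0 ts G else if k < i then PS (i - 1) ts else PS i ts)
    else PS i ts)"
| "ssubst n k G (Imp A B) = Imp (ssubst n k G A) (ssubst n k G B)"
| "ssubst n k G (AllI A) = AllI (ssubst n k (fshift n 1 G) A)"
| "ssubst n k G (AllP m A) = AllP m (ssubst n k (pvshift m 0 G) A)"
| "ssubst n k G (Mu ts D) = Mu ts (ssubst n (if length ts = n then Suc k else k)
      (psshift (length ts) 0 (fshift n (length ts) G)) D)"

text \<open>Unfolding: D[mu C xs D<zs> / C(zs)][ts/xs]\<close>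
definition unfold_mu :: "'f trm list \<Rightarrow> 'f form \<Rightarrow> 'f form" where
  "unfold_mu ts D = (let n = length ts in
     finst 0 ts (ssubst n 0 (Mu (map V [0..<n]) (fshift n (2 * n) D)) D))"

fun occ :: "nat \<Rightarrow> nat \<Rightarrow> 'f form \<Rightarrow> bool" where
  "occ m k (PS i ts) = (length ts = m \<and> i = k)"
| "occ m k (Imp A B) = (occ m k A \<or> occ m k B)"
| "occ m k (AllI A) = occ m k A"
| "occ m k (AllP n A) = occ m k A"
| "occ m k (Mu ts D) = occ m (if length ts = m then Suc k else k) D"
| "occ m k Bot = False"
| "occ m k (PV i ts) = False"

fun pos :: "nat \<Rightarrow> nat \<Rightarrow> 'f form \<Rightarrow> bool"
and neg :: "nat \<Rightarrow> nat \<Rightarrow> 'f form \<Rightarrow> bool" where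
  "pos m k (Imp A B) = (neg m k A \<and> pos m k B)"
| "pos m k (AllI A) = pos m k A"
| "pos m k (AllP n A) = pos m k A"
| "pos m k (Mu ts D) = pos m (if length ts = m then Suc k else k) D"
| "pos m k Bot = True"
| "pos m k (PV i ts) = True"
| "pos m k (PS i ts) = True"
| "neg m k (Imp A B) = (pos m k A \<and> neg m k B)"
| "neg m k (AllI A) = neg m k A"
| "neg m k (AllP n A) = neg m k A"
| "neg m k (Mu ts D) = neg m (if length ts = m then Suc k else k) D"
| "neg m k Bot = True"
| "neg m k (PV i ts) = True"
| "neg m k (PS i ts) = (\<not> (length ts = m \<and> i = k))"

fun is_type :: "'f form \<Rightarrow> bool" where
  "is_type (Imp A B) = (is_type A \<and> is_type B)"
| "is_type (AllI A) = is_type A"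
| "is_type (AllP n A) = is_type A"
| "is_type (Mu ts D) = (is_type D \<and> occ (length ts) 0 D \<and> pos (length ts) 0 D)"
| "is_type Bot = True"
| "is_type (PV i ts) = True"
| "is_type (PS i ts) = True"

fun has_arrow :: "'f form \<Rightarrow> bool" where
  "has_arrow (Imp A B) = True"
| "has_arrow (AllI A) = has_arrow A"
| "has_arrow (AllP n A) = has_arrow A"
| "has_arrow (Mu ts D) = has_arrow D"
| "has_arrow Bot = False"
| "has_arrow (PV i ts) = False"
| "has_arrow (PS i ts) = False"

fun atomic :: "'f form \<Rightarrow> bool" where
  "atomic Bot = True"
| "atomic (PV i ts) = True"
| "atomic (PS i ts) = True"
| "atomic _ = False"

fun allIn :: "nat \<Rightarrow> 'f form \<Rightarrow> 'f form" where
  "allIn 0 A = A"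
| "allIn (Suc n) A = AllI (allIn n A)"

inductive sub :: "('f trm \<times> 'f trm) set \<Rightarrow> 'f form \<Rightarrow> 'f form \<Rightarrow> bool"
  for EE :: "('f trm \<times> 'f trm) set" where
  s_refl: "is_type A \<Longrightarrow> sub EE A A"
| s_arr: "sub EE A A' \<Longrightarrow> sub EE B B' \<Longrightarrow> is_type (Imp A' B) \<Longrightarrow> is_type (Imp A B')
    \<Longrightarrow> sub EE (Imp A' B) (Imp A B')"
| s_allI_l: "sub EE (finst 0 [s] A) B \<Longrightarrow> is_type (AllI A) \<Longrightarrow> is_type B
    \<Longrightarrow> sub EE (AllI A) B"
| s_allP_l: "sub EE (psubst n 0 G A) B \<Longrightarrow> is_type (AllP n A) \<Longrightarrow> is_type B
    \<Longrightarrow> sub EE (AllP n A) B"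
| s_allI_r: "sub EE (fshift 0 1 A) B \<Longrightarrow> is_type A \<Longrightarrow> is_type (AllI B)
    \<Longrightarrow> sub EE A (AllI B)"
| s_allP_r: "sub EE (pvshift n 0 A) B \<Longrightarrow> is_type A \<Longrightarrow> is_type (AllP n B)
    \<Longrightarrow> sub EE A (AllP n B)"
| s_eq: "sub EE A (finst 0 [v] B) \<Longrightarrow> eq_inst EE v w \<Longrightarrow> is_type A
    \<Longrightarrow> is_type (finst 0 [w] B) \<Longrightarrow> sub EE A (finst 0 [w] B)"
| s_trans: "sub EE A B \<Longrightarrow> sub EE B C \<Longrightarrow> is_type A \<Longrightarrow> is_type C \<Longrightarrow> sub EE A C"
| s_fold: "is_type (unfold_mu ts D) \<Longrightarrow> is_type (Mu ts D)
    \<Longrightarrow> sub EE (unfold_mu ts D) (Mu ts D)"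
| s_unfold: "is_type (unfold_mu ts D) \<Longrightarrow> is_type (Mu ts D)
    \<Longrightarrow> sub EE (Mu ts D) (unfold_mu ts D)"
| s_mu: "sub EE (ssubst (length ts) 0 (fshift (length ts) (length ts) F) D) F
    \<Longrightarrow> is_type (Mu ts D) \<Longrightarrow> is_type (finst 0 ts F)
    \<Longrightarrow> sub EE (Mu ts D) (finst 0 ts F)"

datatype lterm = LVar nat | Lam lterm | App lterm lterm

definition turing_half :: lterm where
  "turing_half = Lam (Lam (App (LVar 0) (App (App (LVar 1) (LVar 1)) (LVar 0))))"

definition Ycomb :: lterm where
  "Ycomb = App turing_half turing_half"

definition ctx_ok :: "'f form list \<Rightarrow> bool" where
  "ctx_ok \<Gamma> \<longleftrightarrow> (\<forall>A \<in> set \<Gamma>. is_type A)"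

inductive has_type :: "('f trm \<times> 'f trm) set \<Rightarrow> 'f form list \<Rightarrow> lterm \<Rightarrow> 'f form \<Rightarrow> bool"
  for EE :: "('f trm \<times> 'f trm) set" where
  t_var: "i < length \<Gamma> \<Longrightarrow> ctx_ok \<Gamma> \<Longrightarrow> has_type EE \<Gamma> (LVar i) (\<Gamma> ! i)"
| t_lam: "has_type EE (A # \<Gamma>) u B \<Longrightarrow> ctx_ok \<Gamma> \<Longrightarrow> is_type (Imp A B)
    \<Longrightarrow> has_type EE \<Gamma> (Lam u) (Imp A B)"
| t_app: "has_type EE \<Gamma> t (Imp A B) \<Longrightarrow> has_type EE \<Gamma> u A \<Longrightarrow> has_type EE \<Gamma> (App t u) B"
| t_allI_i: "has_type EE (map (fshift 0 1) \<Gamma>) t A \<Longrightarrow> ctx_ok \<Gamma> \<Longrightarrow> has_type EE \<Gamma> t (AllI A)"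
| t_allP_i: "has_type EE (map (pvshift n 0) \<Gamma>) t A \<Longrightarrow> ctx_ok \<Gamma> \<Longrightarrow> has_type EE \<Gamma> t (AllP n A)"
| t_allI_e: "has_type EE \<Gamma> t (AllI A) \<Longrightarrow> is_type (finst 0 [s] A) \<Longrightarrow> has_type EE \<Gamma> t (finst 0 [s] A)"
| t_allP_e: "has_type EE \<Gamma> t (AllP n A) \<Longrightarrow> is_type (psubst n 0 G A)
    \<Longrightarrow> has_type EE \<Gamma> t (psubst n 0 G A)"
| t_eq: "has_type EE \<Gamma> t (finst 0 [v] A) \<Longrightarrow> eq_inst EE v w \<Longrightarrow> is_type (finst 0 [w] A)
    \<Longrightarrow> has_type EE \<Gamma> t (finst 0 [w] A)"
| t_sub: "has_type EE \<Gamma> t A \<Longrightarrow> sub EE A B \<Longrightarrow> has_type EE \<Gamma> t B"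
| t_Y: "has_type EE (map (psshift n 0) \<Gamma>)  t
      (Imp (allIn n (Imp (PS 0 (map V [0..<n])) (psshift n 0 F)))
           (allIn n (Imp D (psshift n 0 F))))
    \<Longrightarrow> ctx_ok \<Gamma> \<Longrightarrow> is_type (allIn n (Imp (Mu (map V [0..<n]) (fshift n n D)) F))
    \<Longrightarrow> has_type EE \<Gamma> (App Ycomb t) (allIn n (Imp (Mu (map V [0..<n]) (fshift n n D)) F))"

end

theory Submission
  imports Defs
begin

text \<open>An abstraction can only be typed by arrow introduction followed by rules that
  preserve the presence of an arrow: shifting and term instantiation (quantifier and
  equational rules) do not touch arrows, substitution for a predicate variable or
  symbol cannot remove one, and unfolding a mu-type keeps the arrows of its body.
  Atomic types contain no arrow.\<close>

lemma has_arrow_fshift [simp]: "has_arrow (fshift c d A) = has_arrow A"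
  by (induction c d A rule: fshift.induct) auto

lemma has_arrow_finst [simp]: "has_arrow (finst k ss A) = has_arrow A"
  by (induction k ss A rule: finst.induct) auto

lemma has_arrow_pvshift [simp]: "has_arrow (pvshift m c A) = has_arrow A"
  by (induction m c A rule: pvshift.induct) auto

lemma has_arrow_psshift [simp]: "has_arrow (psshift m c A) = has_arrow A"
  by (induction m c A rule: psshift.induct) auto

lemma has_arrow_psubst: "has_arrow A \<Longrightarrow> has_arrow (psubst n k G A)"
  by (induction n k G A rule: psubst.induct) auto

lemma has_arrow_ssubst: "has_arrow A \<Longrightarrow> has_arrow (ssubst n k G A)"
  by (induction n k G A rule: ssubst.induct) auto

lemma has_arrow_ssubstD: "has_arrow (ssubst n k G A) \<Longrightarrow> has_arrow A \<or> has_arrow G"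
  by (induction n k G A rule: ssubst.induct) (auto split: if_splits)

lemma has_arrow_unfold_mu: "has_arrow (unfold_mu ts D) = has_arrow D"
  unfolding unfold_mu_def Let_def
  using has_arrow_ssubst has_arrow_ssubstD by fastforce

lemma sub_has_arrow: "sub EE A B \<Longrightarrow> has_arrow A \<Longrightarrow> has_arrow B"
proof (induction rule: sub.induct)
  case (s_allP_l n G A B)
  then show ?case using has_arrow_psubst by auto
next
  case (s_fold ts D)
  then show ?case using has_arrow_unfold_mu by auto
next
  case (s_unfold ts D)
  then show ?case using has_arrow_unfold_mu by auto
next
  case (s_mu ts F D)
  then show ?case using has_arrow_ssubst by auto
qed auto

lemma has_type_Lam_has_arrow: "has_type EE \<Gamma> (Lam u) A \<Longrightarrow> has_arrow A"
proof (induction \<Gamma> "Lam u" A arbitrary: u rule: has_type.induct)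
  case (t_allP_e \<Gamma> n A G)
  then show ?case using has_arrow_psubst by auto
next
  case (t_sub \<Gamma> A B)
  then show ?case using sub_has_arrow by blast
qed (auto simp: Ycomb_def)

lemma atomic_not_has_arrow: "atomic A \<Longrightarrow> \<not> has_arrow A"
  by (cases A) auto

theorem corollary4p2:
  fixes EE :: "('f trm \<times> 'f trm) set"
  shows "(\<forall>\<Gamma> t A. has_type EE \<Gamma> t A \<and> atomic A \<longrightarrow> (\<forall>u. t \<noteq> Lam u))
       \<and> (\<forall>\<Gamma> u B. has_type EE \<Gamma> (Lam u) B \<longrightarrow> has_arrow B)"
  using has_type_Lam_has_arrow atomic_not_has_arrow by blast

end
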